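(* Let $M=(S,\mathrm{Act},P)$ be an MDP and $T\subseteq S$. Let $(x,r)\in[0,1]^S\times\mathbb{N}_\infty^S$ satisfy: (1) $D^{\max}(r)\le r$; (2) $x\le B^{\min}(x)$; (3) for all $s\in S\setminus T$, $x(s)>0$ implies $r(s)<\infty$ (all inequalities between functions pointwise). Then $\Pr^{\min}_s(\Diamond T)\ge x(s)$ for all $s\in S$.
   Context: An MDP is a tuple $M=(S,\mathrm{Act},P)$ with $S$ finite, $\mathrm{Act}$ finite, $P\colon S\times\mathrm{Act}\times S\to[0,1]$ with $\sum_{s'}P(s,a,s')\in\{0,1\}$; $\mathrm{Act}(s)=\{a\mid\sum_{s'}P(s,a,s')=1\}$ is nonempty for all $s$; $\mathrm{Post}(s,a)=\{s'\mid P(s,a,s')>0\}$. A strategy is $\sigma\colon S\to\mathrm{Act}$ with $\sigma(s)\in\mathrm{Act}(s)$, inducing a Markov chain with transitions $P(s,\sigma(s),\cdot)$; $\Pr^\sigma_s(\Diamond T)$ is the probability of visiting $T$ from $s$ and $\Pr^{\min}_s(\Diamond T)=\min_\sigma\Pr^\sigma_s(\Diamond T)$. $\mathbb{N}_\infty=\mathbb{N}\cup\{\infty\}$, $1+\infty=\infty$. $D^{\max}(r)(s)=0$ for $s\in T$ and $1+\max_{a\in\mathrm{Act}(s)}\min_{s'\in\mathrm{Post}(s,a)}r(s')$ for $s\notin T$. $B^{\min}(x)(s)=1$ for $s\in T$ and $\min_{a\in\mathrm{Act}(s)}\sum_{s'\in\mathrm{Post}(s,a)}P(s,a,s')x(s')$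 for $s\notin T$. *)

theory Defs
  imports Complex_Main "HOL-Library.Extended_Nat"
begin

definition is_mdp :: "('s::finite \<Rightarrow> 'a::finite \<Rightarrow> 's \<Rightarrow> real) \<Rightarrow> bool" where
  "is_mdp P \<longleftrightarrow>
     (\<forall>s a t. 0 \<le> P s a t \<and> P s a t \<le> 1) \<and>
     (\<forall>s a. (\<Sum>t\<in>UNIV. P s a t) \<in> {0, 1}) \<and>
     (\<forall>s. \<exists>a. (\<Sum>t\<in>UNIV. P s a t) = 1)"

definition Act :: "('s::finite \<Rightarrow> 'a::finite \<Rightarrow> 's \<Rightarrow> real) \<Rightarrow> 's \<Rightarrow> 'a set" where
  "Act P s = {a. (\<Sum>t\<in>UNIV. P s a t) = 1}"

definition Post :: "('s::finite \<Rightarrow> 'a::finite \<Rightarrow> 's \<Rightarrow> real) \<Rightarrow> 's \<Rightarrow> 'a \<Rightarrow> 's set" where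
  "Post P s a = {t. P s a t > 0}"

definition strategies :: "('s::finite \<Rightarrow> 'a::finite \<Rightarrow> 's \<Rightarrow> real) \<Rightarrow> ('s \<Rightarrow> 'a) set" where
  "strategies P = {\<sigma>. \<forall>s. \<sigma> s \<in> Act P s}"

fun reach_within :: "('s::finite \<Rightarrow> 'a::finite \<Rightarrow> 's \<Rightarrow> real) \<Rightarrow> ('s \<Rightarrow> 'a) \<Rightarrow> 's set \<Rightarrow> nat \<Rightarrow> 's \<Rightarrow> real" where
  "reach_within P \<sigma> T 0 s = (if s \<in> T then 1 else 0)"
| "reach_within P \<sigma> T (Suc n) s =
     (if s \<in> T then 1 else (\<Sum>t\<in>UNIV. P s (\<sigma> s) t * reach_within P \<sigma> T n t))"

(* Pr^\<sigma>_s(\<Diamond>T): the limit (= supremum) of the step-bounded reachability probabilities *)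
definition Pr_reach :: "('s::finite \<Rightarrow> 'a::finite \<Rightarrow> 's \<Rightarrow> real) \<Rightarrow> ('s \<Rightarrow> 'a) \<Rightarrow> 's \<Rightarrow> 's set \<Rightarrow> real" where
  "Pr_reach P \<sigma> s T = (SUP n. reach_within P \<sigma> T n s)"

definition Pr_min_reach :: "('s::finite \<Rightarrow> 'a::finite \<Rightarrow> 's \<Rightarrow> real) \<Rightarrow> 's \<Rightarrow> 's set \<Rightarrow> real" where
  "Pr_min_reach P s T = Min ((\<lambda>\<sigma>. Pr_reach P \<sigma> s T) ` strategies P)"

definition Dmax :: "('s::finite \<Rightarrow> 'a::finite \<Rightarrow> 's \<Rightarrow> real) \<Rightarrow> 's set \<Rightarrow> ('s \<Rightarrow> enat) \<Rightarrow> 's \<Rightarrow> enat" where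
  "Dmax P T r s = (if s \<in> T then 0
     else 1 + Max ((\<lambda>a. Min (r ` Post P s a)) ` Act P s))"

definition Bmin :: "('s::finite \<Rightarrow> 'a::finite \<Rightarrow> 's \<Rightarrow> real) \<Rightarrow> 's set \<Rightarrow> ('s \<Rightarrow> real) \<Rightarrow> 's \<Rightarrow> real" where
  "Bmin P T x s = (if s \<in> T then 1
     else Min ((\<lambda>a. \<Sum>t\<in>Post P s a. P s a t * x t) ` Act P s))"

end

theory Submission
  imports Defs
begin

text \<open>Fix a strategy \<sigma> and let d = x - p, where p s is the probability of reaching T from s
  under \<sigma>. Since p solves the one-step equation of the induced chain and x is a sub-fixpoint
  of Bmin, d satisfies d \<le> P_\<sigma> d outside T and d \<le> 0 on T. If the maximum m of d were
  positive, pick a state of minimal rank r among those where d = m. There d is a weighted mean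
  of successor values that are all at most m, so every successor also attains m; but Dmax r \<le> r
  with r finite there yields a successor of smaller rank.\<close>

lemma strategies_row_sum:
  "\<sigma> \<in> strategies P \<Longrightarrow> (\<Sum>t\<in>UNIV. P s (\<sigma> s) t) = 1"
  unfolding strategies_def Act_def by auto

lemma is_mdp_nonneg: "is_mdp P \<Longrightarrow> 0 \<le> P s a t"
  unfolding is_mdp_def by auto

lemma strategies_nonempty:
  assumes "is_mdp P"
  shows "strategies P \<noteq> {}"
proof -
  have "\<forall>s. \<exists>a. a \<in> Act P s"
    using assms unfolding is_mdp_def Act_def by auto
  then have "(\<lambda>s. SOME a. a \<in> Act P s) \<in> strategies P"
    unfolding strategies_def by (auto intro: someI_ex)
  then show ?thesis by auto
qed

lemma Post_nonempty:
  assumes "is_mdp P" "a \<in> Act P s"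
  shows "Post P s a \<noteq> {}"
proof
  assume "Post P s a = {}"
  then have "P s a t = 0" for t
    using is_mdp_nonneg[OF assms(1)] unfolding Post_def by (metis empty_iff le_less mem_Collect_eq)
  then show False using assms(2) unfolding Act_def by simp
qed

lemma reach_within_bounded:
  assumes "is_mdp P" "\<sigma> \<in> strategies P"
  shows "0 \<le> reach_within P \<sigma> T n s \<and> reach_within P \<sigma> T n s \<le> 1"
proof (induction n arbitrary: s)
  case 0
  then show ?case by simp
next
  case (Suc n)
  have "0 \<le> (\<Sum>t\<in>UNIV. P s (\<sigma> s) t * reach_within P \<sigma> T n t)"
    by (intro sum_nonneg mult_nonneg_nonneg) (use Suc is_mdp_nonneg[OF assms(1)] in auto)
  moreover have "(\<Sum>t\<in>UNIV. P s (\<sigma> s) t * reach_within P \<sigma> T n t) \<le> (\<Sum>t\<in>UNIV. P s (\<sigma> s) t)"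
    using sum_mono[of UNIV "\<lambda>t. P s (\<sigma> s) t * reach_within P \<sigma> T n t" "P s (\<sigma> s)"]
      Suc is_mdp_nonneg[OF assms(1)] by (simp add: mult_left_le)
  ultimately show ?case using strategies_row_sum[OF assms(2)] by simp
qed

lemma reach_within_Suc_mono:
  assumes "is_mdp P"
  shows "reach_within P \<sigma> T n s \<le> reach_within P \<sigma> T (Suc n) s"
proof (induction n arbitrary: s)
  case 0
  have "0 \<le> (\<Sum>t\<in>UNIV. P s (\<sigma> s) t * reach_within P \<sigma> T 0 t)"
    using is_mdp_nonneg[OF assms] by (intro sum_nonneg mult_nonneg_nonneg) auto
  then show ?case by simp
next
  case (Suc n)
  have "(\<Sum>t\<in>UNIV. P s (\<sigma> s) t * reach_within P \<sigma> T n t)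
      \<le> (\<Sum>t\<in>UNIV. P s (\<sigma> s) t * reach_within P \<sigma> T (Suc n) t)"
    by (intro sum_mono mult_left_mono) (use Suc is_mdp_nonneg[OF assms] in auto)
  then show ?case by simp
qed

lemma reach_within_tendsto_Pr_reach:
  assumes "is_mdp P" "\<sigma> \<in> strategies P"
  shows "(\<lambda>n. reach_within P \<sigma> T n s) \<longlonglongrightarrow> Pr_reach P \<sigma> s T"
  unfolding Pr_reach_def
proof (rule LIMSEQ_incseq_SUP)
  show "bdd_above (range (\<lambda>n. reach_within P \<sigma> T n s))"
    using reach_within_bounded[OF assms] by (intro bdd_aboveI) auto
  show "incseq (\<lambda>n. reach_within P \<sigma> T n s)"
    using reach_within_Suc_mono[OF assms(1)] by (intro incseq_SucI) auto
qed

lemma Pr_reach_nonneg: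
  assumes "is_mdp P" "\<sigma> \<in> strategies P"
  shows "0 \<le> Pr_reach P \<sigma> s T"
  using reach_within_tendsto_Pr_reach[OF assms] reach_within_bounded[OF assms]
  by (intro LIMSEQ_le_const[where X = "\<lambda>n. reach_within P \<sigma> T n s"]) auto

lemma Pr_reach_unfold:
  assumes "is_mdp P" "\<sigma> \<in> strategies P"
  shows "Pr_reach P \<sigma> s T =
    (if s \<in> T then 1 else (\<Sum>t\<in>UNIV. P s (\<sigma> s) t * Pr_reach P \<sigma> t T))"
proof -
  have "(\<lambda>n. reach_within P \<sigma> T (Suc n) s) \<longlonglongrightarrow> Pr_reach P \<sigma> s T"
    using reach_within_tendsto_Pr_reach[OF assms] by (rule LIMSEQ_Suc)
  moreover have "(\<lambda>n. reach_within P \<sigma> T (Suc n) s) \<longlonglongrightarrow>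
      (if s \<in> T then 1 else (\<Sum>t\<in>UNIV. P s (\<sigma> s) t * Pr_reach P \<sigma> t T))"
    by (simp del: reach_within.simps(1) add: if_distrib[of "\<lambda>y. (\<lambda>n. y) \<longlonglongrightarrow> _"]
        tendsto_sum tendsto_mult_left reach_within_tendsto_Pr_reach[OF assms])
  ultimately show ?thesis by (rule LIMSEQ_unique)
qed

lemma weighted_mean_ge_max_imp_eq:
  fixes w d :: "'b \<Rightarrow> real"
  assumes "finite A" "\<And>u. u \<in> A \<Longrightarrow> 0 \<le> w u" "sum w A = 1" "\<And>u. u \<in> A \<Longrightarrow> d u \<le> m"
    and "m \<le> (\<Sum>u\<in>A. w u * d u)" "t \<in> A" "0 < w t"
  shows "d t = m"
proof -
  have nonneg: "\<forall>u\<in>A. 0 \<le> w u * (m - d u)"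
    using assms(2,4) by simp
  have "(\<Sum>u\<in>A. w u * (m - d u)) = m - (\<Sum>u\<in>A. w u * d u)"
    using assms(3) by (simp add: right_diff_distrib sum_subtractf flip: sum_distrib_right)
  also have "\<dots> \<le> 0" using assms(5) by simp
  moreover have "0 \<le> (\<Sum>u\<in>A. w u * (m - d u))"
    using nonneg by (simp add: sum_nonneg)
  ultimately have "(\<Sum>u\<in>A. w u * (m - d u)) = 0"
    by linarith
  then have "w t * (m - d t) = 0"
    using assms(1,6) nonneg by (simp add: sum_nonneg_eq_0_iff)
  then show ?thesis using assms(7) by simp
qed

lemma ranked_maximum_principle:
  fixes Q :: "'s::finite \<Rightarrow> 's \<Rightarrow> real" and d :: "'s \<Rightarrow> real" and r :: "'s \<Rightarrow> 'b::linorder"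
  assumes Q_nonneg: "\<And>s t. 0 \<le> Q s t"
    and Q_stochastic: "\<And>s. s \<notin> T \<Longrightarrow> (\<Sum>t\<in>UNIV. Q s t) = 1"
    and on_target: "\<And>s. s \<in> T \<Longrightarrow> d s \<le> 0"
    and subharmonic: "\<And>s. s \<notin> T \<Longrightarrow> d s \<le> (\<Sum>t\<in>UNIV. Q s t * d t)"
    and rank_decreases: "\<And>s. s \<notin> T \<Longrightarrow> 0 < d s \<Longrightarrow> \<exists>t. 0 < Q s t \<and> r t < r s"
  shows "d s \<le> 0"
proof (rule ccontr)
  assume "\<not> d s \<le> 0"
  define m where "m = Max (range d)"
  have le_m: "d t \<le> m" for t
    unfolding m_def by (rule Max_ge) auto
  have "m \<in> range d"
    unfolding m_def by (rule Max_in) auto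
  then have "r ` {t. d t = m} \<noteq> {}" by auto
  then have "Min (r ` {t. d t = m}) \<in> r ` {t. d t = m}" by (rule Min_in[rotated]) simp
  then obtain s0 where "d s0 = m" and "r s0 = Min (r ` {t. d t = m})"
    by auto
  then have s0_min: "r s0 \<le> r t" if "d t = m" for t
    using that by (simp add: Min_le)
  have "0 < d s0" using \<open>d s0 = m\<close> le_m[of s] \<open>\<not> d s \<le> 0\<close> by linarith
  then have "s0 \<notin> T" using on_target by force
  then obtain t where "0 < Q s0 t" "r t < r s0"
    using rank_decreases \<open>0 < d s0\<close> by blast
  have "m \<le> (\<Sum>u\<in>UNIV. Q s0 u * d u)"
    using subharmonic[OF \<open>s0 \<notin> T\<close>] \<open>d s0 = m\<close> by simp
  then have "d t = m"
    using Q_stochastic[OF \<open>s0 \<notin> T\<close>] \<open>0 < Q s0 t\<close>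
    by (intro weighted_mean_ge_max_imp_eq[of UNIV "Q s0" d m t]) (simp_all add: Q_nonneg le_m)
  then show False using s0_min \<open>r t < r s0\<close> leD by blast
qed

lemma Dmax_le_imp_smaller_successor:
  assumes "is_mdp P" "Dmax P T r s \<le> r s" "s \<notin> T" "r s < \<infinity>" "a \<in> Act P s"
  shows "\<exists>t\<in>Post P s a. r t < r s"
proof -
  have "1 + Min (r ` Post P s a) \<le> 1 + Max ((\<lambda>a. Min (r ` Post P s a)) ` Act P s)"
    using assms(5) by (intro add_left_mono Max_ge) auto
  also have "\<dots> = Dmax P T r s"
    using assms(3) by (simp add: Dmax_def)
  also have "\<dots> \<le> r s"
    by (rule assms(2))
  finally have "1 + Min (r ` Post P s a) \<le> r s" .
  then have "Min (r ` Post P s a) < r s"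
    using assms(4) by (cases "Min (r ` Post P s a)"; cases "r s") (auto simp: one_enat_def)
  moreover have "Min (r ` Post P s a) \<in> r ` Post P s a"
    using Post_nonempty[OF assms(1,5)] by (intro Min_in) auto
  ultimately show ?thesis by auto
qed

lemma Bmin_le_step_sum:
  assumes "is_mdp P" "s \<notin> T" "a \<in> Act P s"
  shows "Bmin P T x s \<le> (\<Sum>t\<in>UNIV. P s a t * x t)"
proof -
  have "Bmin P T x s \<le> (\<Sum>t\<in>Post P s a. P s a t * x t)"
    unfolding Bmin_def using assms(2,3) by (auto intro: Min_le)
  also have "\<dots> = (\<Sum>t\<in>UNIV. P s a t * x t)"
    unfolding Post_def using is_mdp_nonneg[OF assms(1)]
    by (intro sum.mono_neutral_left) (auto simp: le_less)
  finally show ?thesis .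
qed

lemma Pr_reach_ge_certificate:
  fixes P :: "'s::finite \<Rightarrow> 'a::finite \<Rightarrow> 's \<Rightarrow> real"
  assumes mdp: "is_mdp P" and \<sigma>: "\<sigma> \<in> strategies P"
    and x_le_1: "\<And>s. x s \<le> 1"
    and Dmax_le: "\<And>s. Dmax P T r s \<le> r s"
    and x_le_Bmin: "\<And>s. x s \<le> Bmin P T x s"
    and r_finite: "\<And>s. s \<notin> T \<Longrightarrow> 0 < x s \<Longrightarrow> r s < \<infinity>"
  shows "x s \<le> Pr_reach P \<sigma> s T"
proof -
  let ?p = "\<lambda>s. Pr_reach P \<sigma> s T"
  have \<sigma>_Act: "\<sigma> s \<in> Act P s" for s
    using \<sigma> unfolding strategies_def by auto
  have "x s - ?p s \<le> 0"
  proof (rule ranked_maximum_principle[where Q = "\<lambda>s. P s (\<sigma> s)" and T = T and r = r])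
    show "x s - ?p s \<le> 0" if "s \<in> T" for s
      using that x_le_1[of s] Pr_reach_unfold[OF mdp \<sigma>, of s T] by simp
    show "x s - ?p s \<le> (\<Sum>t\<in>UNIV. P s (\<sigma> s) t * (x t - ?p t))" if "s \<notin> T" for s
      using x_le_Bmin[of s] Bmin_le_step_sum[OF mdp that \<sigma>_Act, of x] that
        Pr_reach_unfold[OF mdp \<sigma>, of s T]
      by (simp add: right_diff_distrib sum_subtractf)
    show "\<exists>t. 0 < P s (\<sigma> s) t \<and> r t < r s" if "s \<notin> T" "0 < x s - ?p s" for s
    proof -
      have "0 < x s" using that(2) Pr_reach_nonneg[OF mdp \<sigma>, of s T] by linarith
      then show ?thesis
        using Dmax_le_imp_smaller_successor[OF mdp Dmax_le that(1) r_finite[OF that(1)] \<sigma>_Act]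
        unfolding Post_def by auto
    qed
  qed (simp_all add: is_mdp_nonneg[OF mdp] strategies_row_sum[OF \<sigma>])
  then show ?thesis by simp
qed

theorem proposition4:
  fixes P :: "'s::finite \<Rightarrow> 'a::finite \<Rightarrow> 's \<Rightarrow> real"
    and T :: "'s set" and x :: "'s \<Rightarrow> real" and r :: "'s \<Rightarrow> enat"
  assumes "is_mdp P"
    and "\<forall>s. 0 \<le> x s \<and> x s \<le> 1"
    and "\<forall>s. Dmax P T r s \<le> r s"
    and "\<forall>s. x s \<le> Bmin P T x s"
    and "\<forall>s. s \<notin> T \<longrightarrow> x s > 0 \<longrightarrow> r s < \<infinity>"
  shows "\<forall>s. Pr_min_reach P s T \<ge> x s"
proof
  fix s
  have "x s \<le> Pr_reach P \<sigma> s T" if "\<sigma> \<in> strategies P" for \<sigma>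
    by (rule Pr_reach_ge_certificate[OF assms(1) that, where r = r]) (use assms(2-5) in blast)+
  then show "Pr_min_reach P s T \<ge> x s"
    unfolding Pr_min_reach_def using strategies_nonempty[OF assms(1)] by (subst Min_ge_iff) auto
qed

end
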